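(* In the FIND setting of the context, let $\mathcal C_r$ and $\mathcal C_s$ be leaf clusters of $\mathcal T$, choose consistent orderings of $\mathcal T_r^+$ and $\mathcal T_s^+$, and let $\boldsymbol\Sigma_{r,g}$, $\boldsymbol\Sigma_{s,g}$ denote the matrices produced by the elimination process for target $r$ and target $s$ respectively. Then for every cluster $\mathcal C_i$ that is a node of both $\mathcal T_r^+$ and $\mathcal T_s^+$, $$\boldsymbol\Sigma_{r,i}(\mathcal S_i\cup\mathcal B_i,\mathcal S_i\cup\mathcal B_i)=\boldsymbol\Sigma_{s,i}(\mathcal S_i\cup\mathcal B_i,\mathcal S_i\cup\mathcal B_i).$$
   Context: Setting (FIND). $\mathcal M$ is a finite set of mesh nodes; $\mathbf A$ is an invertible complex matrix indexed by $\mathcal M\times\mathcal M$, structurally symmetric ($A_{ij}\neq0\iff A_{ji}\neq0$); distinct nodes $i,j$ are connected if $A_{ij}\neq 0$. $\boldsymbol\Sigma$ is a complex matrix indexed by $\mathcal M\times\mathcal M$ with $\Sigma_{ij}=0$ whenever $i\neq j$ and $i,j$ are not connected. Matrices are indexed by $\mathcal M$ itself (the ordering only determines the sequence of eliminations). $\dagger$ is conjugate transpose, $\mathbf X^{-\dagger}=(\mathbf X^{-1})^\dagger$. $\mathbf X(X,Y)$ is the submatrix with rows in $X$, columns in $Y$. For a cluster $\mathcal C\subseteq\mathcal M$: boundary set $\mathcal B_{\mathcal C}=\{i\in\mathcal C: A_{ij}\neq 0\text{ for some } j\notin\mathcal C\}$, inner set $\mathcal I_{\mathcal C}=\mathcal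 C\setminus\mathcal B_{\mathcal C}$; for $\mathcal C_g$ write $\mathcal B_g,\mathcal I_g$. Cluster tree: $\mathcal T$ is a rooted binary tree of clusters with root $\mathcal M$, each non-leaf cluster the disjoint union of its two children. For a leaf $\mathcal C_r$ with path $r=a_0,\dots,a_d$ (root) and $b_k$ the sibling of $a_k$, the augmented tree $\mathcal T_r^+$ has root $\mathcal C_{-r}=\mathcal M\setminus\mathcal C_r$; for $0\le k\le d-2$, $\mathcal C_{-a_k}=\mathcal M\setminus\mathcal C_{a_k}$ has children $\mathcal C_{b_k}$ and $\mathcal C_{-a_{k+1}}$, with $\mathcal C_{-a_{d-1}}$ identified with $\mathcal C_{b_{d-1}}$; each basic cluster $\mathcal C_{b_k}$ carries its subtree from $\mathcal T$. (A node's subtree is determined by the node, so a cluster common to two augmented trees has the same subtree in both.) Private inner nodes: $\mathcal S_g=\mathcal I_g$ for a leaf $g$ of an augmented tree; $\mathcal S_g=\mathcal I_g\setminus(\mathcal I_i\cup\mathcal I_j)$ if $g$ has children $i,j$. Consistent ordering: a total order $g_1,\dots,g_m$ of the nodes of $\mathcal T_r^+$ with every node after all its descendants. Elimination for target $r$: $\mathbf A_{r,g_1}=\mathbf A$, $\boldsymbol\Sigma_{r,g_1}=\boldsymbol\Sigma$; for each $g$ (with $\mathbf A_{r,g}(\mathcal S_g,\mathcal S_g)$ invertible), $\mathcal L_g=\mathbf A_{r,g}(\mathcal B_g,\mathcal S_g)\mathbf A_{r,g}(\mathcal S_g,\mathcal S_g)^{-1}$, $\mathbf L_g$ is the identity on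 $\mathcal M$ except $\mathbf L_g(\mathcal B_g,\mathcal S_g)=\mathcal L_g$, $\mathbf A_{r,g+}=\mathbf L_g^{-1}\mathbf A_{r,g}$, $\boldsymbol\Sigma_{r,g+}=\mathbf L_g^{-1}\boldsymbol\Sigma_{r,g}\mathbf L_g^{-\dagger}$, and $\mathbf A_{r,g_{t+1}}=\mathbf A_{r,g_t+}$, $\boldsymbol\Sigma_{r,g_{t+1}}=\boldsymbol\Sigma_{r,g_t+}$. Thus $\boldsymbol\Sigma_{r,i}$ is the matrix just before eliminating $\mathcal S_i$. *)

theory Defs
  imports "HOL-Analysis.Analysis"
begin

text \<open>Mesh nodes: the finite type 'n (so the mesh M is UNIV :: 'n set).
  Matrices indexed by M x M: complex ^ 'n ^ 'n.\<close>

definition ctrans :: "complex ^'n ^'n \<Rightarrow> complex ^'n ^'n" where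
  "ctrans X = (\<chi> i j. cnj (X $ j $ i))"

definition struct_sym :: "complex ^'n ^'n \<Rightarrow> bool" where
  "struct_sym A \<longleftrightarrow> (\<forall>i j. A $ i $ j \<noteq> 0 \<longleftrightarrow> A $ j $ i \<noteq> 0)"

definition connected_nodes :: "complex ^'n ^'n \<Rightarrow> 'n \<Rightarrow> 'n \<Rightarrow> bool" where
  "connected_nodes A i j \<longleftrightarrow> i \<noteq> j \<and> A $ i $ j \<noteq> 0"

definition sigma_pattern :: "complex ^'n ^'n \<Rightarrow> complex ^'n ^'n \<Rightarrow> bool" where
  "sigma_pattern A S \<longleftrightarrow> (\<forall>i j. i \<noteq> j \<and> \<not> connected_nodes A i j \<longrightarrow> S $ i $ j = 0)"

definition bnd :: "complex ^'n ^'n \<Rightarrow> 'n set \<Rightarrow> 'n set" where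
  "bnd A C = {i \<in> C. \<exists>j. j \<notin> C \<and> A $ i $ j \<noteq> 0}"

definition inner :: "complex ^'n ^'n \<Rightarrow> 'n set \<Rightarrow> 'n set" where
  "inner A C = C - bnd A C"

datatype 'a ctree = Leaf "'a set" | Node "'a set" "'a ctree" "'a ctree"

fun cl :: "'a ctree \<Rightarrow> 'a set" where
  "cl (Leaf c) = c"
| "cl (Node c _ _) = c"

fun subtrees :: "'a ctree \<Rightarrow> 'a ctree set" where
  "subtrees (Leaf c) = {Leaf c}"
| "subtrees (Node c l r) = insert (Node c l r) (subtrees l \<union> subtrees r)"

fun proper_subtrees :: "'a ctree \<Rightarrow> 'a ctree set" where
  "proper_subtrees (Leaf c) = {}"
| "proper_subtrees (Node c l r) = subtrees l \<union> subtrees r"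

definition clusters :: "'a ctree \<Rightarrow> 'a set set" where
  "clusters t = cl ` subtrees t"

fun wf_ctree :: "'a ctree \<Rightarrow> bool" where
  "wf_ctree (Leaf c) \<longleftrightarrow> c \<noteq> {}"
| "wf_ctree (Node c l r) \<longleftrightarrow> wf_ctree l \<and> wf_ctree r \<and> c = cl l \<union> cl r \<and> cl l \<inter> cl r = {}"

definition cluster_tree :: "'a ctree \<Rightarrow> bool" where
  "cluster_tree T \<longleftrightarrow> wf_ctree T \<and> cl T = UNIV"

text \<open>Augmented tree for target leaf cluster R.
  aug_go R acc t: t is the subtree at a_(k+1) (containing R), acc is the augmented
  subtree rooted at C_(-a_(k+1)).  The new node C_(-a_k) has children C_(b_k) and C_(-a_(k+1)).\<close>
fun aug_go :: "'a set \<Rightarrow> 'a ctree \<Rightarrow> 'a ctree \<Rightarrow> 'a ctree" where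
  "aug_go R acc (Leaf c) = acc"
| "aug_go R acc (Node c l r) =
     (if R \<subseteq> cl l then aug_go R (Node (cl r \<union> cl acc) r acc) l
      else aug_go R (Node (cl l \<union> cl acc) l acc) r)"

text \<open>At the root a_d = M, C_(-a_(d-1)) is identified with C_(b_(d-1)).\<close>
fun aug_tree :: "'a set \<Rightarrow> 'a ctree \<Rightarrow> 'a ctree" where
  "aug_tree R (Leaf c) = Leaf {}"
| "aug_tree R (Node c l r) = (if R \<subseteq> cl l then aug_go R r l else aug_go R l r)"

fun priv_of :: "complex ^'n ^'n \<Rightarrow> 'n ctree \<Rightarrow> 'n set" where
  "priv_of A (Leaf c) = inner A c"
| "priv_of A (Node c l r) = inner A c - (inner A (cl l) \<union> inner A (cl r))"

definition priv :: "complex ^'n ^'n \<Rightarrow> 'n ctree \<Rightarrow> 'n set \<Rightarrow> 'n set" where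
  "priv A t g = priv_of A (THE u. u \<in> subtrees t \<and> cl u = g)"

definition consistent_ordering :: "'a ctree \<Rightarrow> 'a set list \<Rightarrow> bool" where
  "consistent_ordering t ord \<longleftrightarrow> distinct ord \<and> set ord = clusters t \<and>
     (\<forall>u \<in> subtrees t. \<forall>v \<in> proper_subtrees u. \<forall>p q.
        p < length ord \<and> q < length ord \<and> ord ! p = cl v \<and> ord ! q = cl u \<longrightarrow> p < q)"

definition is_subinv :: "complex ^'n ^'n \<Rightarrow> 'n set \<Rightarrow> ('n \<Rightarrow> 'n \<Rightarrow> complex) \<Rightarrow> bool" where
  "is_subinv X S Y \<longleftrightarrow>
     (\<forall>i\<in>S. \<forall>j\<in>S. (\<Sum>k\<in>S. X $ i $ k * Y k j) = (if i = j then 1 else 0)) \<and>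
     (\<forall>i\<in>S. \<forall>j\<in>S. (\<Sum>k\<in>S. Y i k * X $ k $ j) = (if i = j then 1 else 0))"

definition sub_invertible :: "complex ^'n ^'n \<Rightarrow> 'n set \<Rightarrow> bool" where
  "sub_invertible X S \<longleftrightarrow> (\<exists>Y. is_subinv X S Y)"

definition subinv :: "complex ^'n ^'n \<Rightarrow> 'n set \<Rightarrow> 'n \<Rightarrow> 'n \<Rightarrow> complex" where
  "subinv X S = (SOME Y. is_subinv X S Y)"

definition Lmat :: "complex ^'n ^'n \<Rightarrow> 'n set \<Rightarrow> 'n set \<Rightarrow> complex ^'n ^'n" where
  "Lmat Acur B S = (\<chi> i j. if i \<in> B \<and> j \<in> S then (\<Sum>k\<in>S. Acur $ i $ k * subinv Acur S k j)
                          else if i = j then 1 else 0)"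

text \<open>One elimination step for node g of tree t; A0 is the original matrix A
  (which defines boundary and inner sets).\<close>
definition elim_step :: "complex ^'n ^'n \<Rightarrow> 'n ctree \<Rightarrow>
    (complex ^'n ^'n) \<times> (complex ^'n ^'n) \<Rightarrow> 'n set \<Rightarrow> (complex ^'n ^'n) \<times> (complex ^'n ^'n)" where
  "elim_step A0 t st g =
     (let Li = matrix_inv (Lmat (fst st) (bnd A0 g) (priv A0 t g))
      in (Li ** fst st, Li ** snd st ** ctrans Li))"

text \<open>State (A_(r,g), Sigma_(r,g)) just before eliminating the node at position p of ord.\<close>
definition elim_state :: "complex ^'n ^'n \<Rightarrow> complex ^'n ^'n \<Rightarrow> 'n ctree \<Rightarrow> 'n set list \<Rightarrow> nat
    \<Rightarrow> (complex ^'n ^'n) \<times> (complex ^'n ^'n)" where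
  "elim_state A Sig t ord p = foldl (elim_step A t) (A, Sig) (take p ord)"

definition elim_welldef :: "complex ^'n ^'n \<Rightarrow> complex ^'n ^'n \<Rightarrow> 'n ctree \<Rightarrow> 'n set list \<Rightarrow> bool" where
  "elim_welldef A Sig t ord \<longleftrightarrow>
     (\<forall>p < length ord. sub_invertible (fst (elim_state A Sig t ord p)) (priv A t (ord ! p)))"

end

theory Submission
  imports Defs
begin

text \<open>Eliminating the private nodes of a cluster h multiplies the state from the left by
  \<open>I - E\<close>, where \<open>E\<close> lives in the block \<open>(B_h, S_h)\<close> of \<open>h \<times> h\<close>, and \<open>\<Sigma>\<close> also from
  the right by its adjoint. Hence, for a cluster g, the step of a cluster disjoint from g leaves
  the \<open>(g, g)\<close> blocks untouched, the step of a cluster inside g computes the new \<open>(g, g)\<close>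
  blocks from the old ones alone, and steps of disjoint clusters commute. Clusters form a
  laminar family and consistent orderings list descendants first, so just before g is
  eliminated its \<open>(g, g)\<close> blocks coincide with those obtained from \<open>(A, \<Sigma>)\<close> by eliminating
  only the clusters strictly inside g, in any bottom-up order. Finally, a cluster g common to
  \<open>T\<^sub>r\<^sup>+\<close> and \<open>T\<^sub>s\<^sup>+\<close> has the same descendants in both trees: the clusters of T inside g
  together with the complements of the proper clusters of T containing \<open>M - g\<close>.\<close>

section \<open>Elimination factors\<close>

definition Lblock :: "complex ^'n ^'n \<Rightarrow> 'n set \<Rightarrow> 'n set \<Rightarrow> complex ^'n ^'n" where
  "Lblock X B S = (\<chi> i j. if i \<in> B \<and> j \<in> S then (\<Sum>k\<in>S. X $ i $ k * subinv X S k j) else 0)"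

lemma Lmat_eq_mat_1_plus_Lblock: "B \<inter> S = {} \<Longrightarrow> Lmat X B S = mat 1 + Lblock X B S"
  unfolding Lmat_def Lblock_def mat_def by (auto simp: vec_eq_iff)

lemma Lblock_mult_Lblock: "S1 \<inter> B2 = {} \<Longrightarrow> Lblock X1 B1 S1 ** Lblock X2 B2 S2 = 0"
  unfolding matrix_matrix_mult_def Lblock_def by (auto simp: vec_eq_iff intro!: sum.neutral)

lemma Lblock_cong:
  assumes "\<And>i k. i \<in> B \<union> S \<Longrightarrow> k \<in> S \<Longrightarrow> X $ i $ k = X' $ i $ k"
  shows "Lblock X B S = Lblock X' B S"
proof -
  have "\<forall>i\<in>S. \<forall>k\<in>S. X $ i $ k = X' $ i $ k"
    using assms by blast
  then have "is_subinv X S = is_subinv X' S"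
    unfolding is_subinv_def by (auto simp: fun_eq_iff)
  then show ?thesis
    unfolding Lblock_def subinv_def using assms by (auto simp: vec_eq_iff intro!: sum.cong)
qed

lemma matrix_inv_unique:
  fixes L N :: "'a::semiring_1 ^'n ^'n"
  assumes "L ** N = mat 1" "N ** L = mat 1"
  shows "matrix_inv L = N"
proof -
  have inv: "matrix_inv L ** L = mat 1"
    unfolding matrix_inv_def using someI[where P = "\<lambda>N. L ** N = mat 1 \<and> N ** L = mat 1"] assms
    by blast
  have "matrix_inv L = matrix_inv L ** (L ** N)"
    by (simp add: assms(1))
  also have "\<dots> = (matrix_inv L ** L) ** N"
    by (rule matrix_mul_assoc)
  finally show ?thesis
    by (simp add: inv)
qed

lemma matrix_diff_ldistrib: "(A :: 'a::ring_1 ^'n ^'m) ** (B - C) = A ** B - A ** C"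
  by (simp add: matrix_matrix_mult_def vec_eq_iff sum_subtractf algebra_simps)

lemma matrix_diff_rdistrib: "((A :: 'a::ring_1 ^'n ^'m) - B) ** C = A ** C - B ** C"
  by (simp add: matrix_matrix_mult_def vec_eq_iff sum_subtractf algebra_simps)

lemma matrix_add_rdistrib: "((A :: 'a::semiring_1 ^'n ^'m) + B) ** C = A ** C + B ** C"
  by (simp add: matrix_matrix_mult_def vec_eq_iff sum.distrib algebra_simps)

lemma matrix_inv_Lmat:
  assumes "B \<inter> S = {}"
  shows "matrix_inv (Lmat X B S) = mat 1 - Lblock X B S"
proof (rule matrix_inv_unique)
  have "Lblock X B S ** Lblock X B S = 0"
    using assms by (intro Lblock_mult_Lblock) auto
  then show "Lmat X B S ** (mat 1 - Lblock X B S) = mat 1"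
    and "(mat 1 - Lblock X B S) ** Lmat X B S = mat 1"
    by (simp_all add: Lmat_eq_mat_1_plus_Lblock[OF assms] matrix_add_ldistrib matrix_add_rdistrib
        matrix_diff_ldistrib matrix_diff_rdistrib)
qed

lemma ctrans_matrix_mult: "ctrans (X ** Y) = ctrans Y ** ctrans X"
  by (simp add: ctrans_def matrix_matrix_mult_def vec_eq_iff mult.commute)

lemma Lblock_factor_mult_row:
  assumes "a \<notin> B"
  shows "((mat 1 - Lblock X B S) ** Y) $ a $ b = Y $ a $ b"
proof -
  have "(mat 1 - Lblock X B S) $ a $ k * Y $ k $ b = (if a = k then Y $ k $ b else 0)" for k
    using assms by (simp add: Lblock_def mat_def)
  then show ?thesis
    by (simp add: matrix_matrix_mult_def)
qed

lemma mult_ctrans_Lblock_factor_col: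
  assumes "b \<notin> B"
  shows "(Y ** ctrans (mat 1 - Lblock X B S)) $ a $ b = Y $ a $ b"
proof -
  have "Y $ a $ k * ctrans (mat 1 - Lblock X B S) $ k $ b = (if b = k then Y $ a $ k else 0)" for k
    using assms by (simp add: Lblock_def mat_def ctrans_def)
  then show ?thesis
    by (simp add: matrix_matrix_mult_def)
qed

lemma Lblock_factors_commute:
  assumes "S1 \<inter> B2 = {}" "S2 \<inter> B1 = {}"
  shows "(mat 1 - Lblock X1 B1 S1) ** (mat 1 - Lblock X2 B2 S2)
       = (mat 1 - Lblock X2 B2 S2) ** (mat 1 - Lblock X1 B1 S1)"
  using Lblock_mult_Lblock[OF assms(1), of X1 B1 X2 S2] Lblock_mult_Lblock[OF assms(2), of X2 B2 X1 S1]
  by (simp add: matrix_diff_ldistrib matrix_diff_rdistrib algebra_simps)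

definition block_step :: "'n set \<Rightarrow> 'n set \<Rightarrow>
    (complex ^'n ^'n) \<times> (complex ^'n ^'n) \<Rightarrow> (complex ^'n ^'n) \<times> (complex ^'n ^'n)" where
  "block_step B S st =
     (let L = mat 1 - Lblock (fst st) B S in (L ** fst st, L ** snd st ** ctrans L))"

lemma elim_step_eq_block_step:
  "bnd A g \<inter> priv A t g = {} \<Longrightarrow> elim_step A t st g = block_step (bnd A g) (priv A t g) st"
  unfolding elim_step_def block_step_def by (simp add: matrix_inv_Lmat)

definition agree_on :: "'n set \<Rightarrow>
    (complex ^'n ^'n) \<times> (complex ^'n ^'n) \<Rightarrow> (complex ^'n ^'n) \<times> (complex ^'n ^'n) \<Rightarrow> bool" where
  "agree_on g s1 s2 \<longleftrightarrow>
     (\<forall>a\<in>g. \<forall>b\<in>g. fst s1 $ a $ b = fst s2 $ a $ b \<and> snd s1 $ a $ b = snd s2 $ a $ b)"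

lemma block_step_agree_on_disjoint:
  assumes "B \<inter> g = {}"
  shows "agree_on g (block_step B S st) st"
  unfolding agree_on_def
proof (intro ballI)
  fix a b assume "a \<in> g" "b \<in> g"
  with assms have "a \<notin> B" "b \<notin> B" by auto
  then show "fst (block_step B S st) $ a $ b = fst st $ a $ b \<and>
      snd (block_step B S st) $ a $ b = snd st $ a $ b"
    by (simp add: block_step_def Let_def Lblock_factor_mult_row mult_ctrans_Lblock_factor_col)
qed

lemma matrix_mult_row_cong:
  assumes "\<And>k. k \<notin> g \<Longrightarrow> M $ a $ k = 0" and "\<And>k. k \<in> g \<Longrightarrow> X $ k $ b = X' $ k $ b"
  shows "(M ** X) $ a $ b = (M ** X') $ a $ b"
  unfolding matrix_matrix_mult_def using assms by (auto intro!: sum.cong) (metis mult_zero_left)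

lemma matrix_mult_ctrans_col_cong:
  assumes "\<And>k. k \<notin> g \<Longrightarrow> M $ b $ k = 0" and "\<And>k. k \<in> g \<Longrightarrow> X $ a $ k = X' $ a $ k"
  shows "(X ** ctrans M) $ a $ b = (X' ** ctrans M) $ a $ b"
  unfolding matrix_matrix_mult_def ctrans_def using assms
  by (auto intro!: sum.cong) (metis complex_cnj_zero mult_zero_right)

lemma block_step_agree_on:
  assumes "B \<subseteq> g" "S \<subseteq> g" and agree: "agree_on g s1 s2"
  shows "agree_on g (block_step B S s1) (block_step B S s2)"
proof -
  define L where "L = mat 1 - Lblock (fst s2) B S"
  have L1: "Lblock (fst s1) B S = Lblock (fst s2) B S"
    using assms by (intro Lblock_cong) (auto simp: agree_on_def subset_iff)
  have L_local: "L $ a $ k = 0" if "a \<in> g" "k \<notin> g" for a k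
    using that \<open>S \<subseteq> g\<close> by (auto simp: L_def Lblock_def mat_def)
  have fst: "(L ** fst s1) $ a $ b = (L ** fst s2) $ a $ b"
    and snd: "(L ** snd s1) $ a $ b = (L ** snd s2) $ a $ b" if "a \<in> g" "b \<in> g" for a b
    using that agree by (auto simp: agree_on_def intro!: matrix_mult_row_cong L_local)
  have "(L ** snd s1 ** ctrans L) $ a $ b = (L ** snd s2 ** ctrans L) $ a $ b"
    if "a \<in> g" "b \<in> g" for a b
    using that by (auto intro!: matrix_mult_ctrans_col_cong L_local snd)
  with fst show ?thesis
    unfolding agree_on_def block_step_def Let_def L1 L_def[symmetric] by simp
qed

lemma block_step_commute:
  assumes "B1 \<inter> (B2 \<union> S2) = {}" "B2 \<inter> (B1 \<union> S1) = {}"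
  shows "block_step B1 S1 (block_step B2 S2 st) = block_step B2 S2 (block_step B1 S1 st)"
proof -
  obtain X Y where st: "st = (X, Y)" by fastforce
  define L1 where "L1 = mat 1 - Lblock X B1 S1"
  define L2 where "L2 = mat 1 - Lblock X B2 S2"
  have L1_after_L2: "Lblock (L2 ** X) B1 S1 = Lblock X B1 S1"
    unfolding L2_def by (intro Lblock_cong Lblock_factor_mult_row) (use assms in blast)
  have L2_after_L1: "Lblock (L1 ** X) B2 S2 = Lblock X B2 S2"
    unfolding L1_def by (intro Lblock_cong Lblock_factor_mult_row) (use assms in blast)
  have comm: "L1 ** L2 = L2 ** L1"
    unfolding L1_def L2_def using assms by (intro Lblock_factors_commute) auto
  have comm_ctrans: "ctrans L2 ** ctrans L1 = ctrans L1 ** ctrans L2"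
    by (metis comm ctrans_matrix_mult)
  have "L1 ** (L2 ** Y ** ctrans L2) ** ctrans L1 = (L1 ** L2) ** Y ** (ctrans L2 ** ctrans L1)"
    by (simp add: matrix_mul_assoc)
  also have "\<dots> = (L2 ** L1) ** Y ** (ctrans L1 ** ctrans L2)"
    by (simp only: comm comm_ctrans)
  also have "\<dots> = L2 ** (L1 ** Y ** ctrans L1) ** ctrans L2"
    by (simp add: matrix_mul_assoc)
  finally have "L1 ** (L2 ** Y ** ctrans L2) ** ctrans L1 = L2 ** (L1 ** Y ** ctrans L1) ** ctrans L2" .
  moreover have "L1 ** (L2 ** X) = L2 ** (L1 ** X)"
    by (simp add: matrix_mul_assoc comm)
  ultimately show ?thesis
    unfolding block_step_def Let_def st fst_conv snd_conv L1_def[symmetric] L2_def[symmetric]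
      L1_after_L2 L2_after_L1 by simp
qed

section \<open>Folding commuting steps along bottom-up orderings\<close>

lemma agree_on_foldl_filter:
  assumes "\<And>h s1 s2. h \<in> set xs \<Longrightarrow> h \<subseteq> g \<Longrightarrow> agree_on g s1 s2 \<Longrightarrow> agree_on g (f s1 h) (f s2 h)"
    and "\<And>h s. h \<in> set xs \<Longrightarrow> \<not> h \<subseteq> g \<Longrightarrow> agree_on g (f s h) s"
    and "agree_on g s1 s2"
  shows "agree_on g (foldl f s1 xs) (foldl f s2 (filter (\<lambda>h. h \<subseteq> g) xs))"
  using assms
proof (induction xs arbitrary: s1 s2)
  case (Cons h xs)
  have IH: "agree_on g (foldl f s1' xs) (foldl f s2' (filter (\<lambda>h. h \<subseteq> g) xs))"
    if "agree_on g s1' s2'" for s1' s2'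
    using Cons.prems(1,2) that by (intro Cons.IH) auto
  show ?case
  proof (cases "h \<subseteq> g")
    case True
    with Cons.prems(1,3) have "agree_on g (f s1 h) (f s2 h)"
      by simp
    with True IH show ?thesis
      by simp
  next
    case False
    with Cons.prems(2,3) have "agree_on g (f s1 h) s2"
      unfolding agree_on_def by (metis list.set_intros(1))
    with False IH show ?thesis
      by simp
  qed
qed simp

definition laminar :: "'a set set \<Rightarrow> bool" where
  "laminar F \<longleftrightarrow> (\<forall>x\<in>F. \<forall>y\<in>F. x \<subseteq> y \<or> y \<subseteq> x \<or> x \<inter> y = {})"

definition bottom_up :: "'a set list \<Rightarrow> bool" where
  "bottom_up xs \<longleftrightarrow> distinct xs \<and> sorted_wrt (\<lambda>x y. \<not> y \<subset> x) xs"

lemma foldl_commute_step: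
  assumes "\<And>y s. y \<in> set zs \<Longrightarrow> f (f s x) y = f (f s y) x"
  shows "f (foldl f s zs) x = foldl f (f s x) zs"
  using assms
proof (induction zs arbitrary: s)
  case (Cons z zs)
  have IH: "f (foldl f s' zs) x = foldl f (f s' x) zs" for s'
    by (meson Cons.IH Cons.prems list.set_intros(2))
  have "f (f s x) z = f (f s z) x"
    by (rule Cons.prems) simp
  then show ?case
    by (simp add: IH)
qed simp

lemma foldl_bottom_up_eq:
  assumes "bottom_up xs" "bottom_up ys" "set xs = set ys" "laminar (set xs)"
    and "\<And>x y s. x \<in> set xs \<Longrightarrow> y \<in> set xs \<Longrightarrow> x \<inter> y = {} \<Longrightarrow> f (f s x) y = f (f s y) x"
  shows "foldl f s xs = foldl f s ys"
  using assms
proof (induction xs arbitrary: ys s)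
  case Nil
  show ?case
    using Nil.prems(3) by simp
next
  case (Cons x xs)
  obtain ys1 ys2 where ys: "ys = ys1 @ x # ys2"
    using Cons.prems(3) by (metis list.set_intros(1) split_list)
  have x_notin: "x \<notin> set ys1" "x \<notin> set ys2"
    using Cons.prems(2) ys by (auto simp: bottom_up_def)
  have ys1_sub: "set ys1 \<subseteq> set xs"
    using Cons.prems(3) ys x_notin by auto
  txt \<open>Everything before x in ys is neither above nor below x, hence disjoint from it, so the
    step of x can be moved to the front.\<close>
  have disjoint: "x \<inter> y = {}" if "y \<in> set ys1" for y
  proof -
    have "\<not> x \<subset> y"
      using Cons.prems(2) that unfolding ys bottom_up_def by (auto simp: sorted_wrt_append)
    moreover have "\<not> y \<subset> x"
      using Cons.prems(1) that ys1_sub by (auto simp: bottom_up_def)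
    moreover have "y \<noteq> x" "y \<in> set (x # xs)"
      using that x_notin ys1_sub by auto
    ultimately show ?thesis
      using Cons.prems(4) unfolding laminar_def by auto
  qed
  have comm: "f (f s' x) y = f (f s' y) x" if "y \<in> set ys1" for y s'
    using Cons.prems(5) disjoint ys1_sub that by (meson list.set_intros subsetD)
  have "foldl f s ys = foldl f (f (foldl f s ys1) x) ys2"
    unfolding ys by simp
  also have "\<dots> = foldl f (f s x) (ys1 @ ys2)"
    using foldl_commute_step[of ys1 f x, OF comm] by simp
  also have "\<dots> = foldl f (f s x) xs"
  proof (rule sym, rule Cons.IH)
    show "bottom_up xs"
      using Cons.prems(1) by (simp add: bottom_up_def)
    show "set xs = set (ys1 @ ys2)"
      using Cons.prems(1,3) ys x_notin by (auto simp: bottom_up_def)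
    show "laminar (set xs)"
      using Cons.prems(4) by (simp add: laminar_def)
    show "bottom_up (ys1 @ ys2)"
      using Cons.prems(2) unfolding ys bottom_up_def by (auto simp: sorted_wrt_append)
    show "f (f s' x') y = f (f s' y) x'"
      if "x' \<in> set xs" "y \<in> set xs" "x' \<inter> y = {}" for x' y s'
      using Cons.prems(5) that by (meson list.set_intros(2))
  qed
  finally show ?case
    by simp
qed

lemma laminar_subset: "laminar F \<Longrightarrow> G \<subseteq> F \<Longrightarrow> laminar G"
  unfolding laminar_def by blast

lemma set_filter_take_bottom_up:
  assumes "bottom_up xs" "p < length xs"
  shows "set (filter (\<lambda>h. h \<subseteq> xs ! p) (take p xs)) = {h \<in> set xs. h \<subseteq> xs ! p} - {xs ! p}"
proof (intro equalityI subsetI)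
  fix h assume "h \<in> set (filter (\<lambda>h. h \<subseteq> xs ! p) (take p xs))"
  then obtain i where "i < p" "h = xs ! i" "h \<subseteq> xs ! p"
    using assms(2) by (auto simp: in_set_conv_nth)
  moreover have "xs ! i \<noteq> xs ! p"
    using assms \<open>i < p\<close> by (simp add: bottom_up_def nth_eq_iff_index_eq)
  ultimately show "h \<in> {h \<in> set xs. h \<subseteq> xs ! p} - {xs ! p}"
    using assms(2) by auto
next
  fix h assume h: "h \<in> {h \<in> set xs. h \<subseteq> xs ! p} - {xs ! p}"
  then obtain j where j: "j < length xs" "h = xs ! j"
    by (auto simp: in_set_conv_nth)
  have "j < p"
  proof (rule ccontr)
    assume "\<not> j < p"
    with h j have "p < j"
      by (metis DiffE insertI1 nat_neq_iff)
    with assms(1) j have "\<not> h \<subset> xs ! p"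
      unfolding bottom_up_def sorted_wrt_iff_nth_less by blast
    with h show False
      by auto
  qed
  with h j show "h \<in> set (filter (\<lambda>h. h \<subseteq> xs ! p) (take p xs))"
    by (auto simp: in_set_conv_nth)
qed

lemma bottom_up_take_disjoint:
  assumes "bottom_up xs" "laminar (set xs)" "p < length xs"
    and "h \<in> set (take p xs)" "\<not> h \<subseteq> xs ! p"
  shows "h \<inter> xs ! p = {}"
proof -
  obtain i where i: "i < p" "h = xs ! i"
    using assms(3,4) by (auto simp: in_set_conv_nth)
  then have "\<not> xs ! p \<subset> h" "h \<noteq> xs ! p"
    using assms(1,3) by (auto simp: bottom_up_def sorted_wrt_iff_nth_less nth_eq_iff_index_eq)
  moreover have "h \<in> set xs" "xs ! p \<in> set xs"
    using assms(3,4) in_set_takeD by auto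
  ultimately show ?thesis
    using assms(2,5) unfolding laminar_def by blast
qed

section \<open>Cluster trees\<close>

lemma subtrees_refl: "t \<in> subtrees t"
  by (cases t) auto

lemma subtrees_trans: "u \<in> subtrees t \<Longrightarrow> v \<in> subtrees u \<Longrightarrow> v \<in> subtrees t"
  by (induction t) auto

lemma wf_ctree_subtree: "wf_ctree t \<Longrightarrow> u \<in> subtrees t \<Longrightarrow> wf_ctree u"
  by (induction t) auto

lemma cl_subtree_subset: "wf_ctree t \<Longrightarrow> u \<in> subtrees t \<Longrightarrow> cl u \<subseteq> cl t"
  by (induction t) auto

lemma cl_nonempty: "wf_ctree t \<Longrightarrow> cl t \<noteq> {}"
  by (induction t) auto

lemma subtrees_nested_or_disjoint:
  "wf_ctree t \<Longrightarrow> u \<in> subtrees t \<Longrightarrow> v \<in> subtrees t \<Longrightarrow>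
     v \<in> subtrees u \<or> u \<in> subtrees v \<or> cl u \<inter> cl v = {}"
proof (induction t)
  case (Node c l r)
  have wf: "wf_ctree l" "wf_ctree r" "cl l \<inter> cl r = {}"
    using Node.prems(1) by auto
  have across: "cl u' \<inter> cl v' = {}" if "u' \<in> subtrees l" "v' \<in> subtrees r" for u' v'
    using wf cl_subtree_subset[of l u'] cl_subtree_subset[of r v'] that by auto
  from Node.prems(2,3) consider "u = Node c l r" | "v = Node c l r"
    | "u \<in> subtrees l" "v \<in> subtrees l" | "u \<in> subtrees r" "v \<in> subtrees r"
    | "u \<in> subtrees l" "v \<in> subtrees r" | "u \<in> subtrees r" "v \<in> subtrees l"
    by auto
  then show ?case
  proof cases
    case 1
    then show ?thesis using Node.prems(3) by simp
  next
    case 2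
    then show ?thesis using Node.prems(2) by simp
  next
    case 3
    then show ?thesis using Node.IH(1) wf by blast
  next
    case 4
    then show ?thesis using Node.IH(2) wf by blast
  next
    case 5
    then show ?thesis using across by blast
  next
    case 6
    then show ?thesis using across by blast
  qed
qed auto

lemma subtree_eq_if_cl_subset:
  assumes "wf_ctree u" "v \<in> subtrees u" "cl u \<subseteq> cl v"
  shows "v = u"
proof (cases u)
  case (Node c l r)
  show ?thesis
  proof (rule ccontr)
    assume "v \<noteq> u"
    then obtain w where w: "w = l \<or> w = r" "v \<in> subtrees w"
      using assms(2) Node by auto
    then have "cl v \<subseteq> cl w"
      using assms(1) Node cl_subtree_subset by auto
    moreover have "cl l \<noteq> {}" "cl r \<noteq> {}" "cl l \<inter> cl r = {}" "c = cl l \<union> cl r"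
      using assms(1) Node cl_nonempty by auto
    ultimately show False
      using assms(3) Node w(1) by auto
  qed
qed (use assms in auto)

lemma subtree_if_cl_subset:
  assumes "wf_ctree t" "u \<in> subtrees t" "v \<in> subtrees t" "cl v \<subseteq> cl u"
  shows "v \<in> subtrees u"
  using subtrees_nested_or_disjoint[OF assms(1-3)]
proof (elim disjE)
  assume "u \<in> subtrees v"
  moreover have "wf_ctree v"
    using assms(1,3) by (rule wf_ctree_subtree)
  ultimately show ?thesis
    using assms(4) subtree_eq_if_cl_subset subtrees_refl by metis
next
  assume "cl u \<inter> cl v = {}"
  then show ?thesis
    using assms cl_nonempty wf_ctree_subtree by blast
qed

lemma subtree_eq_if_cl_eq:
  "wf_ctree t \<Longrightarrow> u \<in> subtrees t \<Longrightarrow> v \<in> subtrees t \<Longrightarrow> cl u = cl v \<Longrightarrow> u = v"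
  by (metis subtree_if_cl_subset subtree_eq_if_cl_subset wf_ctree_subtree order_refl)

lemma clusters_Leaf [simp]: "clusters (Leaf c) = {c}"
  by (simp add: clusters_def)

lemma clusters_Node [simp]: "clusters (Node c l r) = insert c (clusters l \<union> clusters r)"
  by (simp add: clusters_def image_Un)

lemma cl_in_clusters: "cl t \<in> clusters t"
  by (simp add: clusters_def subtrees_refl)

lemma clusters_subset_cl: "wf_ctree t \<Longrightarrow> h \<in> clusters t \<Longrightarrow> h \<subseteq> cl t"
  unfolding clusters_def using cl_subtree_subset by auto

lemma laminar_clusters:
  assumes "wf_ctree t"
  shows "laminar (clusters t)"
  unfolding laminar_def clusters_def
proof (intro ballI)
  fix x y assume "x \<in> cl ` subtrees t" "y \<in> cl ` subtrees t"
  then obtain u v where "u \<in> subtrees t" "v \<in> subtrees t" "x = cl u" "y = cl v"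
    by blast
  then show "x \<subseteq> y \<or> y \<subseteq> x \<or> x \<inter> y = {}"
    using subtrees_nested_or_disjoint[OF assms] cl_subtree_subset wf_ctree_subtree assms by metis
qed

lemma clusters_subtree:
  assumes "wf_ctree t" "u \<in> subtrees t"
  shows "clusters t \<inter> Pow (cl u) = clusters u"
proof -
  have "clusters u \<subseteq> clusters t"
    using assms(2) subtrees_trans unfolding clusters_def by blast
  moreover have "h \<in> clusters u" if "h \<in> clusters t" "h \<subseteq> cl u" for h
    using that assms subtree_if_cl_subset unfolding clusters_def by blast
  ultimately show ?thesis
    using clusters_subset_cl assms wf_ctree_subtree by blast
qed

definition private_nodes :: "complex ^'n ^'n \<Rightarrow> 'n set set \<Rightarrow> 'n set \<Rightarrow> 'n set" where
  "private_nodes A F h = inner A h - \<Union> (inner A ` {h' \<in> F. h' \<subset> h})"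

lemma inner_mono: "C \<subseteq> D \<Longrightarrow> inner A C \<subseteq> inner A D"
  unfolding inner_def bnd_def by auto

lemma private_nodes_subset: "private_nodes A F h \<subseteq> h - bnd A h"
  unfolding private_nodes_def inner_def by auto

lemma private_nodes_cong:
  assumes "F \<inter> Pow h = F' \<inter> Pow h"
  shows "private_nodes A F h = private_nodes A F' h"
proof -
  have "{h' \<in> F. h' \<subset> h} = {h' \<in> F'. h' \<subset> h}"
    using assms by blast
  then show ?thesis
    by (simp add: private_nodes_def)
qed

lemma priv_of_eq_private_nodes:
  assumes "wf_ctree u"
  shows "priv_of A u = private_nodes A (clusters u) (cl u)"
proof (cases u)
  case (Node c l r)
  have wf: "wf_ctree l" "wf_ctree r" "c = cl l \<union> cl r" "cl l \<inter> cl r = {}"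
    using assms Node by auto
  moreover have "cl l \<noteq> {}" "cl r \<noteq> {}"
    using wf cl_nonempty by auto
  ultimately have children: "cl l \<in> {h \<in> clusters u. h \<subset> c}" "cl r \<in> {h \<in> clusters u. h \<subset> c}"
    using Node cl_in_clusters by auto
  have "inner A h \<subseteq> inner A (cl l) \<union> inner A (cl r)" if "h \<in> clusters u" "h \<subset> c" for h
  proof -
    have "h \<subseteq> cl l \<or> h \<subseteq> cl r"
      using that Node wf clusters_subset_cl by auto
    then show ?thesis
      using inner_mono by blast
  qed
  then have "\<Union> (inner A ` {h \<in> clusters u. h \<subset> c}) \<subseteq> inner A (cl l) \<union> inner A (cl r)"
    by blast
  with children have "\<Union> (inner A ` {h \<in> clusters u. h \<subset> c}) = inner A (cl l) \<union> inner A (cl r)"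
    by blast
  then show ?thesis
    unfolding private_nodes_def Node by simp
qed (auto simp: private_nodes_def)

lemma priv_eq_private_nodes:
  assumes "wf_ctree t" "h \<in> clusters t"
  shows "priv A t h = private_nodes A (clusters t) h"
proof -
  obtain u where u: "u \<in> subtrees t" "cl u = h"
    using assms(2) unfolding clusters_def by blast
  have "(THE u. u \<in> subtrees t \<and> cl u = h) = u"
    by (rule the_equality) (use u subtree_eq_if_cl_eq[OF assms(1)] in auto)
  then have "priv A t h = priv_of A u"
    by (simp add: priv_def)
  also have "\<dots> = private_nodes A (clusters u) h"
    using priv_of_eq_private_nodes[OF wf_ctree_subtree[OF assms(1) u(1)]] u(2) by simp
  also have "\<dots> = private_nodes A (clusters t) h"
    using clusters_subtree[OF assms(1) u(1)] u(2) by (intro private_nodes_cong) auto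
  finally show ?thesis .
qed

lemma consistent_ordering_bottom_up:
  assumes "wf_ctree t" "consistent_ordering t ord"
  shows "bottom_up ord"
  unfolding bottom_up_def sorted_wrt_iff_nth_less
proof (intro conjI allI impI notI)
  show "distinct ord"
    using assms(2) unfolding consistent_ordering_def by blast
  fix i j assume ij: "i < j" "j < length ord" and sub: "ord ! j \<subset> ord ! i"
  have "set ord = clusters t"
    using assms(2) unfolding consistent_ordering_def by blast
  then have "ord ! i \<in> clusters t" "ord ! j \<in> clusters t"
    using ij nth_mem[of i ord] nth_mem[of j ord] by auto
  then obtain u v where u: "u \<in> subtrees t" "cl u = ord ! i" and v: "v \<in> subtrees t" "cl v = ord ! j"
    unfolding clusters_def by blast
  have "v \<in> subtrees u" "v \<noteq> u"
    using subtree_if_cl_subset[OF assms(1) u(1) v(1)] u v sub by auto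
  then have "v \<in> proper_subtrees u"
    by (cases u) auto
  moreover have "\<forall>u\<in>subtrees t. \<forall>v\<in>proper_subtrees u. \<forall>p q. p < length ord \<and> q < length ord \<and>
      ord ! p = cl v \<and> ord ! q = cl u \<longrightarrow> p < q"
    using assms(2) unfolding consistent_ordering_def by blast
  ultimately have "j < i"
    using u v ij by auto
  with ij show False
    by simp
qed

section \<open>Augmented trees\<close>

text \<open>The clusters that a subtree of T with cluster C containing the target leaf R contributes
  to the augmented tree (for C = M, all clusters of \<open>T\<^sub>R\<^sup>+\<close>): the clusters not containing R,
  which are the basic clusters \<open>C\<^bsub>b_k\<^esub>\<close> and their descendants, and the complements
  \<open>M - C\<^bsub>a_k\<^esub>\<close> of the clusters on the path from R up to, but excluding, C.\<close>

definition aug_clusters :: "'a set set \<Rightarrow> 'a set \<Rightarrow> 'a set \<Rightarrow> 'a set set" where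
  "aug_clusters F R C = {c \<in> F. \<not> R \<subseteq> c} \<union> uminus ` {c \<in> F. R \<subseteq> c \<and> c \<noteq> C}"

lemma leaf_nonempty: "wf_ctree t \<Longrightarrow> Leaf R \<in> subtrees t \<Longrightarrow> R \<noteq> {}"
  using cl_nonempty wf_ctree_subtree by fastforce

lemma aug_clusters_Node:
  assumes "wf_ctree a" "wf_ctree b" "cl a \<inter> cl b = {}" "R \<noteq> {}" "R \<subseteq> cl a"
  shows "aug_clusters (insert (cl a \<union> cl b) (clusters a \<union> clusters b)) R (cl a \<union> cl b)
       = insert (- cl a) (clusters b) \<union> aug_clusters (clusters a) R (cl a)"
proof -
  have not_in_b: "\<not> R \<subseteq> c" if "c \<in> clusters b" for c
    using that assms clusters_subset_cl by blast
  have below_top: "c \<noteq> cl a \<union> cl b" if "c \<in> clusters a" for c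
    using that assms cl_nonempty clusters_subset_cl by blast
  have "{c \<in> insert (cl a \<union> cl b) (clusters a \<union> clusters b). \<not> R \<subseteq> c}
      = {c \<in> clusters a. \<not> R \<subseteq> c} \<union> clusters b"
    using not_in_b assms(5) by auto
  moreover have "{c \<in> insert (cl a \<union> cl b) (clusters a \<union> clusters b). R \<subseteq> c \<and> c \<noteq> cl a \<union> cl b}
      = insert (cl a) {c \<in> clusters a. R \<subseteq> c \<and> c \<noteq> cl a}"
    using not_in_b below_top assms(5) cl_in_clusters by auto
  ultimately show ?thesis
    unfolding aug_clusters_def by auto
qed

lemma aug_Node_cases:
  assumes "wf_ctree (Node c l r)" "Leaf R \<in> subtrees (Node c l r)"
  obtains a b where "(a, b) = (l, r) \<or> (a, b) = (r, l)" "Leaf R \<in> subtrees a"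
    "aug_go R acc (Node c l r) = aug_go R (Node (cl b \<union> cl acc) b acc) a"
    "aug_tree R (Node c l r) = aug_go R b a"
proof (cases "Leaf R \<in> subtrees l")
  case True
  then have "R \<subseteq> cl l"
    using assms(1) cl_subtree_subset by fastforce
  with True that[of l r] show ?thesis
    by simp
next
  case False
  with assms have "Leaf R \<in> subtrees r"
    by auto
  moreover have "wf_ctree r" "cl l \<inter> cl r = {}"
    using assms(1) by auto
  ultimately have "R \<noteq> {}" "R \<subseteq> cl r"
    using leaf_nonempty cl_subtree_subset by fastforce+
  with \<open>cl l \<inter> cl r = {}\<close> have "\<not> R \<subseteq> cl l"
    by blast
  with \<open>Leaf R \<in> subtrees r\<close> show ?thesis
    using that[of r l] by simp
qed

lemma aug_go_clusters:
  assumes "wf_ctree t" "wf_ctree acc" "Leaf R \<in> subtrees t" "cl acc = - cl t"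
  shows "wf_ctree (aug_go R acc t) \<and>
    clusters (aug_go R acc t) = clusters acc \<union> aug_clusters (clusters t) R (cl t)"
  using assms
proof (induction t arbitrary: acc)
  case (Leaf c)
  then show ?case
    by (auto simp: aug_clusters_def)
next
  case (Node c l r)
  obtain a b where ab: "(a, b) = (l, r) \<or> (a, b) = (r, l)" "Leaf R \<in> subtrees a"
    and aug: "aug_go R acc (Node c l r) = aug_go R (Node (cl b \<union> cl acc) b acc) a"
    by (rule aug_Node_cases[OF Node.prems(1,3)]) blast
  have wf: "wf_ctree a" "wf_ctree b" "cl a \<inter> cl b = {}" "c = cl a \<union> cl b"
    "clusters (Node c l r) = insert (cl a \<union> cl b) (clusters a \<union> clusters b)"
    using ab(1) Node.prems(1) by auto
  define acc' where "acc' = Node (cl b \<union> cl acc) b acc"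
  have acc': "wf_ctree acc'" "cl acc' = - cl a"
    "clusters acc' = insert (- cl a) (clusters b \<union> clusters acc)"
    using wf Node.prems(2,4) by (auto simp: acc'_def)
  have "wf_ctree (aug_go R acc' a) \<and>
      clusters (aug_go R acc' a) = clusters acc' \<union> aug_clusters (clusters a) R (cl a)"
    using ab Node.IH Node.prems(1) acc'(1,2) by auto
  moreover have "R \<noteq> {}" "R \<subseteq> cl a"
    using Node.prems(1) ab(2) wf(1) leaf_nonempty cl_subtree_subset by fastforce+
  ultimately show ?case
    using aug_clusters_Node[of a b R] wf acc'(3) unfolding aug acc'_def[symmetric] by auto
qed

lemma aug_tree_clusters:
  assumes "cluster_tree T" "\<not> (\<exists>c. T = Leaf c)" "Leaf R \<in> subtrees T"
  shows "wf_ctree (aug_tree R T) \<and> clusters (aug_tree R T) = aug_clusters (clusters T) R UNIV"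
proof -
  obtain M l r where T: "T = Node M l r"
    using assms(2) by (cases T) auto
  have "wf_ctree (Node M l r)"
    using assms(1) unfolding T cluster_tree_def by simp
  then obtain a b where ab: "(a, b) = (l, r) \<or> (a, b) = (r, l)" "Leaf R \<in> subtrees a"
    and aug: "aug_tree R T = aug_go R b a"
    by (rule aug_Node_cases[OF _ assms(3)[unfolded T]]) (auto simp: T)
  have wf: "wf_ctree a" "wf_ctree b" "cl a \<inter> cl b = {}" "cl a \<union> cl b = UNIV"
    "clusters T = insert (cl a \<union> cl b) (clusters a \<union> clusters b)"
    using ab(1) assms(1) unfolding T cluster_tree_def by auto
  then have "wf_ctree (aug_go R b a) \<and>
      clusters (aug_go R b a) = clusters b \<union> aug_clusters (clusters a) R (cl a)"
    using ab(2) by (intro aug_go_clusters) auto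
  moreover have "R \<noteq> {}" "R \<subseteq> cl a"
    using ab(2) wf(1) leaf_nonempty cl_subtree_subset by fastforce+
  moreover have "- cl a \<in> clusters b"
  proof -
    have "- cl a = cl b"
      using wf(3,4) by blast
    then show ?thesis
      using cl_in_clusters by simp
  qed
  ultimately show ?thesis
    using aug_clusters_Node[of a b R] wf unfolding aug by auto
qed

lemma aug_clusters_inter_Pow:
  assumes "laminar F" "R \<noteq> {}" "g \<in> aug_clusters F R UNIV"
  shows "aug_clusters F R UNIV \<inter> Pow g = {x \<in> F. x \<subseteq> g} \<union> uminus ` {d \<in> F. - g \<subseteq> d \<and> d \<noteq> UNIV}"
proof -
  have R_g: "\<not> R \<subseteq> g"
    using assms(2,3) by (auto simp: aug_clusters_def)
  have "- d \<in> aug_clusters F R UNIV" if d: "d \<in> F" "- g \<subseteq> d" "d \<noteq> UNIV" for d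
  proof -
    from assms(3) consider "g \<in> F" | c where "g = - c" "c \<in> F" "R \<subseteq> c"
      unfolding aug_clusters_def by blast
    then show ?thesis
    proof cases
      case 1
      have "g \<noteq> UNIV"
        using R_g by auto
      with d 1 assms(1) have "d = - g"
        unfolding laminar_def by blast
      with 1 R_g show ?thesis
        by (simp add: aug_clusters_def)
    next
      case 2
      with d show ?thesis
        unfolding aug_clusters_def by auto
    qed
  qed
  with R_g show ?thesis
    unfolding aug_clusters_def by auto
qed

lemma aug_tree_common_descendants:
  assumes "cluster_tree T" "\<not> (\<exists>c. T = Leaf c)" "Leaf R \<in> subtrees T" "Leaf Q \<in> subtrees T"
    and "g \<in> clusters (aug_tree R T)" "g \<in> clusters (aug_tree Q T)"
  shows "clusters (aug_tree Q T) \<inter> Pow g = clusters (aug_tree R T) \<inter> Pow g"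
proof -
  have wf: "wf_ctree T"
    using assms(1) by (simp add: cluster_tree_def)
  show ?thesis
    using aug_clusters_inter_Pow[OF laminar_clusters[OF wf] leaf_nonempty[OF wf assms(3)], of g]
      aug_clusters_inter_Pow[OF laminar_clusters[OF wf] leaf_nonempty[OF wf assms(4)], of g]
      aug_tree_clusters[OF assms(1-3)] aug_tree_clusters[OF assms(1,2,4)] assms(5,6)
    by simp
qed

section \<open>Elimination along a consistent ordering\<close>

definition cluster_step :: "complex ^'n ^'n \<Rightarrow> 'n set set \<Rightarrow>
    (complex ^'n ^'n) \<times> (complex ^'n ^'n) \<Rightarrow> 'n set \<Rightarrow> (complex ^'n ^'n) \<times> (complex ^'n ^'n)" where
  "cluster_step A F st h = block_step (bnd A h) (private_nodes A F h) st"

lemma bnd_subset: "bnd A h \<subseteq> h"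
  unfolding bnd_def by auto

lemma cluster_step_agree_on:
  "h \<subseteq> g \<Longrightarrow> agree_on g s1 s2 \<Longrightarrow> agree_on g (cluster_step A F s1 h) (cluster_step A F s2 h)"
  unfolding cluster_step_def
  by (intro block_step_agree_on) (use bnd_subset private_nodes_subset in blast)+

lemma cluster_step_agree_on_disjoint: "h \<inter> g = {} \<Longrightarrow> agree_on g (cluster_step A F s h) s"
  unfolding cluster_step_def by (intro block_step_agree_on_disjoint) (use bnd_subset in blast)

lemma cluster_step_commute:
  "x \<inter> y = {} \<Longrightarrow> cluster_step A F (cluster_step A F s x) y = cluster_step A F (cluster_step A F s y) x"
  unfolding cluster_step_def
  by (rule block_step_commute) (use bnd_subset private_nodes_subset in blast)+

lemma cluster_step_cong:
  assumes "F \<inter> Pow h = F' \<inter> Pow h"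
  shows "cluster_step A F s h = cluster_step A F' s h"
  unfolding cluster_step_def private_nodes_cong[OF assms] ..

lemma elim_state_eq_foldl:
  assumes "wf_ctree t" "set ord \<subseteq> clusters t"
  shows "elim_state A Sig t ord p = foldl (cluster_step A (clusters t)) (A, Sig) (take p ord)"
  unfolding elim_state_def
proof (rule foldl_cong[OF refl refl])
  fix st h assume "h \<in> set (take p ord)"
  then have "priv A t h = private_nodes A (clusters t) h"
    using assms by (meson in_set_takeD priv_eq_private_nodes subsetD)
  moreover have "bnd A h \<inter> private_nodes A (clusters t) h = {}"
    using private_nodes_subset by blast
  ultimately show "elim_step A t st h = cluster_step A (clusters t) st h"
    by (simp add: elim_step_eq_block_step cluster_step_def)
qed

lemma priv_union_bnd_subset: "wf_ctree t \<Longrightarrow> h \<in> clusters t \<Longrightarrow> priv A t h \<union> bnd A h \<subseteq> h"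
  using priv_eq_private_nodes private_nodes_subset bnd_subset by blast

lemma elim_state_agree_on_descendants:
  assumes "wf_ctree t" "consistent_ordering t ord" "p < length ord"
  obtains xs where "bottom_up xs" "set xs = clusters t \<inter> Pow (ord ! p) - {ord ! p}"
    "agree_on (ord ! p) (elim_state A Sig t ord p)
       (foldl (cluster_step A (clusters t \<inter> Pow (ord ! p))) (A, Sig) xs)"
proof
  let ?g = "ord ! p" and ?step = "cluster_step A (clusters t)"
  let ?xs = "filter (\<lambda>h. h \<subseteq> ?g) (take p ord)"
  have ord: "bottom_up ord" "set ord = clusters t" "laminar (set ord)"
    using assms(1,2) consistent_ordering_bottom_up laminar_clusters
    by (auto simp: consistent_ordering_def)
  then show "bottom_up ?xs"
    by (simp add: bottom_up_def sorted_wrt_filter)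
  show "set ?xs = clusters t \<inter> Pow ?g - {?g}"
    using set_filter_take_bottom_up[OF ord(1) assms(3)] ord(2) by auto
  have "agree_on ?g (foldl ?step (A, Sig) (take p ord)) (foldl ?step (A, Sig) ?xs)"
  proof (rule agree_on_foldl_filter)
    show "agree_on ?g (?step s h) s" if "h \<in> set (take p ord)" "\<not> h \<subseteq> ?g" for h s
      using bottom_up_take_disjoint[OF ord(1,3) assms(3) that]
      by (rule cluster_step_agree_on_disjoint)
    show "agree_on ?g (?step s1 h) (?step s2 h)" if "h \<subseteq> ?g" "agree_on ?g s1 s2" for h s1 s2
      using that by (rule cluster_step_agree_on)
  qed (simp_all add: agree_on_def)
  also have "foldl ?step (A, Sig) ?xs = foldl (cluster_step A (clusters t \<inter> Pow ?g)) (A, Sig) ?xs"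
    by (rule foldl_cong) (auto intro: cluster_step_cong)
  finally show "agree_on ?g (elim_state A Sig t ord p)
      (foldl (cluster_step A (clusters t \<inter> Pow ?g)) (A, Sig) ?xs)"
    using elim_state_eq_foldl[OF assms(1)] ord(2) by simp
qed

lemma elim_state_agree_on_common_cluster:
  assumes "wf_ctree t" "consistent_ordering t ord" "p < length ord"
    and "wf_ctree t'" "consistent_ordering t' ord'" "q < length ord'"
    and "ord' ! q = ord ! p" "clusters t' \<inter> Pow (ord ! p) = clusters t \<inter> Pow (ord ! p)"
  shows "agree_on (ord ! p) (elim_state A Sig t ord p) (elim_state A Sig t' ord' q)"
proof -
  let ?g = "ord ! p"
  let ?fold = "foldl (cluster_step A (clusters t \<inter> Pow ?g)) (A, Sig)"
  obtain xs where xs: "bottom_up xs" "set xs = clusters t \<inter> Pow ?g - {?g}"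
    "agree_on ?g (elim_state A Sig t ord p) (?fold xs)"
    using elim_state_agree_on_descendants[OF assms(1-3)] by blast
  obtain ys where ys: "bottom_up ys" "set ys = clusters t \<inter> Pow ?g - {?g}"
    "agree_on ?g (elim_state A Sig t' ord' q) (?fold ys)"
    using elim_state_agree_on_descendants[OF assms(4-6)] assms(7,8) by metis
  have "laminar (set xs)"
    unfolding xs(2) by (rule laminar_subset[OF laminar_clusters[OF assms(1)]]) blast
  with xs(1,2) ys(1,2) have "?fold xs = ?fold ys"
    by (intro foldl_bottom_up_eq cluster_step_commute) simp_all
  with xs(3) ys(3) show ?thesis
    by (simp add: agree_on_def)
qed

theorem theorem4:
  fixes A Sig :: "complex ^'n ^'n" and T :: "'n ctree" and R Q :: "'n set"
    and ordR ordQ :: "'n set list"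
  assumes "invertible A" and "struct_sym A" and "sigma_pattern A Sig"
    and "cluster_tree T" and "\<not> (\<exists>c. T = Leaf c)"
    and "Leaf R \<in> subtrees T" and "Leaf Q \<in> subtrees T"
    and "consistent_ordering (aug_tree R T) ordR"
    and "consistent_ordering (aug_tree Q T) ordQ"
    and "elim_welldef A Sig (aug_tree R T) ordR"
    and "elim_welldef A Sig (aug_tree Q T) ordQ"
  shows "\<forall>p q. p < length ordR \<and> q < length ordQ \<and> ordR ! p = ordQ ! q \<longrightarrow>
     (let i = ordR ! p; K = priv A (aug_tree R T) i \<union> bnd A i in
      \<forall>a\<in>K. \<forall>b\<in>K. snd (elim_state A Sig (aug_tree R T) ordR p) $ a $ b
                   = snd (elim_state A Sig (aug_tree Q T) ordQ q) $ a $ b)"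
proof (intro allI impI)
  fix p q assume pq: "p < length ordR \<and> q < length ordQ \<and> ordR ! p = ordQ ! q"
  let ?g = "ordR ! p"
  have wf: "wf_ctree (aug_tree R T)" "wf_ctree (aug_tree Q T)"
    using aug_tree_clusters assms(4-7) by blast+
  have "?g \<in> clusters (aug_tree R T)" "?g \<in> clusters (aug_tree Q T)"
    using assms(8,9) pq nth_mem unfolding consistent_ordering_def by metis+
  then have "agree_on ?g (elim_state A Sig (aug_tree R T) ordR p) (elim_state A Sig (aug_tree Q T) ordQ q)"
    using pq assms(4-9) wf
    by (intro elim_state_agree_on_common_cluster aug_tree_common_descendants) simp_all
  moreover have "priv A (aug_tree R T) ?g \<union> bnd A ?g \<subseteq> ?g"
    using priv_union_bnd_subset wf(1) \<open>?g \<in> clusters (aug_tree R T)\<close> by blast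
  ultimately show "let i = ordR ! p; K = priv A (aug_tree R T) i \<union> bnd A i in
      \<forall>a\<in>K. \<forall>b\<in>K. snd (elim_state A Sig (aug_tree R T) ordR p) $ a $ b
                   = snd (elim_state A Sig (aug_tree Q T) ordQ q) $ a $ b"
    unfolding Let_def agree_on_def by blast
qed

end
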